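(* Let $F:\mathbb{R}^n\rightrightarrows\mathbb{R}^p$ and $G:\mathbb{R}^n\rightrightarrows\mathbb{R}^q$ be nearly convex set-valued mappings and $\Theta\subset\mathbb{R}^n$ a nearly convex set such that $\operatorname{ri}(\operatorname{dom} F)\cap\operatorname{ri}(\operatorname{dom} G)\cap\operatorname{ri}\Theta\neq\emptyset$. Then the set-valued mapping $\Psi:\mathbb{R}^n\times\mathbb{R}^n\times\mathbb{R}^q\rightrightarrows\mathbb{R}^p$ defined by $\Psi(x,u,y)=F(x+u)$ if $x\in\Theta$ and $y\in G(x)$, and $\Psi(x,u,y)=\emptyset$ otherwise, is nearly convex.
   Context: A set $\Omega\subset\mathbb{R}^k$ is nearly convex if there is a convex set $C$ with $C\subset\Omega\subset\overline{C}$. For an arbitrary set $\Omega$, $\operatorname{ri}\Omega=\{a\in\Omega:\exists\delta>0,\ B(a;\delta)\cap\operatorname{aff}\Omega\subset\Omega\}$. For a set-valued mapping $F$: $\operatorname{dom} F=\{x:F(x)\neq\emptyset\}$, $\operatorname{gph} F=\{(x,y):y\in F(x)\}$; $F$ is nearly convex if $\operatorname{gph} F$ is nearly convex. *)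

theory Defs
  imports "HOL-Analysis.Analysis"
begin

text \<open>Set-valued mappings \<open>F : X \<rightrightarrows> Y\<close> are modelled as functions \<open>X \<Rightarrow> Y set\<close>.\<close>

definition nearly_convex :: "'a::euclidean_space set \<Rightarrow> bool" where
  "nearly_convex \<Omega> \<longleftrightarrow> (\<exists>C. convex C \<and> C \<subseteq> \<Omega> \<and> \<Omega> \<subseteq> closure C)"

definition ri :: "'a::euclidean_space set \<Rightarrow> 'a set" where
  "ri \<Omega> = {a \<in> \<Omega>. \<exists>\<delta>>0. ball a \<delta> \<inter> affine hull \<Omega> \<subseteq> \<Omega>}"

definition sv_dom :: "('a \<Rightarrow> 'b set) \<Rightarrow> 'a set" where
  "sv_dom F = {x. F x \<noteq> {}}"

definition gph :: "('a \<Rightarrow> 'b set) \<Rightarrow> ('a \<times> 'b) set" where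
  "gph F = {(x, y). y \<in> F x}"

definition nearly_convex_map :: "('a::euclidean_space \<Rightarrow> 'b::euclidean_space set) \<Rightarrow> bool" where
  "nearly_convex_map F \<longleftrightarrow> nearly_convex (gph F)"

end

theory Submission
  imports Defs
begin

text \<open>The graph of \<open>\<Psi>\<close> is the preimage of \<open>\<Theta> \<times> gph G \<times> gph F\<close> under the linear map
  \<open>((x, u, y), z) \<mapsto> (x, (x, y), (x + u, z))\<close>. Products of nearly convex sets are nearly convex,
  and so is the linear preimage of a nearly convex set \<open>S\<close> that meets \<open>rel_interior S\<close>: for a
  convex \<open>C\<close> between \<open>S\<close> and its closure, the preimage of \<open>rel_interior C = rel_interior S\<close>
  is convex, and each point of the preimage of \<open>S\<close> is approached by shrinking it towards a point
  of that preimage. Relative interiors commute with products, and the relative interior of a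
  domain is the projection of that of the graph, so a point of
  \<open>ri (dom F) \<inter> ri (dom G) \<inter> ri \<Theta>\<close> lifts to such a point with \<open>u = 0\<close>.\<close>

lemma ri_eq_rel_interior: "ri S = rel_interior S"
  unfolding ri_def using mem_rel_interior_ball by blast

lemma rel_interior_eq_between_convex_closure:
  fixes C :: "'a::euclidean_space set"
  assumes "convex C" "C \<subseteq> S" "S \<subseteq> closure C"
  shows "rel_interior S = rel_interior C"
proof -
  have "affine hull S \<subseteq> affine hull (closure C)"
    using assms(3) by (rule hull_mono)
  then have hull_eq: "affine hull S = affine hull C"
    using hull_mono[OF assms(2), of affine] by simp
  have "rel_interior C \<subseteq> rel_interior S"
    using subset_rel_interior[OF assms(2)] hull_eq by simp
  moreover have "rel_interior S \<subseteq> rel_interior (closure C)"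
    using subset_rel_interior[OF assms(3)] hull_eq by simp
  ultimately show ?thesis
    using convex_rel_interior_closure[OF assms(1)] by simp
qed

lemma subset_closure_if_shrinks_into:
  fixes q :: "'a::real_normed_vector"
  assumes "\<And>w e. w \<in> S \<Longrightarrow> 0 < e \<Longrightarrow> e \<le> 1 \<Longrightarrow> w - e *\<^sub>R (w - q) \<in> D"
  shows "S \<subseteq> closure D"
proof
  fix w assume "w \<in> S"
  let ?s = "\<lambda>n. w - (1 / Suc n) *\<^sub>R (w - q)"
  have "\<forall>n. ?s n \<in> D"
    using assms[OF \<open>w \<in> S\<close>] by simp
  moreover have "?s \<longlonglongrightarrow> w - 0 *\<^sub>R (w - q)"
    by (intro tendsto_intros LIMSEQ_Suc[OF lim_1_over_n])
  ultimately show "w \<in> closure D"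
    unfolding closure_sequential scale_zero_left diff_zero by (intro exI[of _ ?s]) blast
qed

lemma nearly_convex_Times:
  assumes "nearly_convex A" "nearly_convex B"
  shows "nearly_convex (A \<times> B)"
proof -
  obtain C D where "convex C" "C \<subseteq> A" "A \<subseteq> closure C" "convex D" "D \<subseteq> B" "B \<subseteq> closure D"
    using assms unfolding nearly_convex_def by blast
  then show ?thesis
    unfolding nearly_convex_def
    by (intro exI[of _ "C \<times> D"]) (auto simp: convex_Times closure_Times)
qed

lemma rel_interior_nearly_convex_Times:
  assumes "nearly_convex A" "nearly_convex B"
  shows "rel_interior (A \<times> B) = rel_interior A \<times> rel_interior B"
proof -
  obtain C D where C: "convex C" "C \<subseteq> A" "A \<subseteq> closure C"
    and D: "convex D" "D \<subseteq> B" "B \<subseteq> closure D"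
    using assms unfolding nearly_convex_def by blast
  have "rel_interior (A \<times> B) = rel_interior (C \<times> D)"
    using C D by (intro rel_interior_eq_between_convex_closure) (auto simp: convex_Times closure_Times)
  also have "\<dots> = rel_interior C \<times> rel_interior D"
    using C(1) D(1) by (rule rel_interior_Times)
  finally show ?thesis
    using rel_interior_eq_between_convex_closure[OF C] rel_interior_eq_between_convex_closure[OF D]
    by simp
qed

lemma rel_interior_nearly_convex_linear_image:
  fixes f :: "'a::euclidean_space \<Rightarrow> 'b::euclidean_space"
  assumes "linear f" "nearly_convex S"
  shows "rel_interior (f ` S) = f ` rel_interior S"
proof -
  obtain C where C: "convex C" "C \<subseteq> S" "S \<subseteq> closure C"
    using assms(2) unfolding nearly_convex_def by blast
  have "f ` S \<subseteq> closure (f ` C)"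
    using C(3) closure_linear_image_subset[OF assms(1)] by blast
  then have "rel_interior (f ` S) = rel_interior (f ` C)"
    using C by (intro rel_interior_eq_between_convex_closure convex_linear_image assms(1)) auto
  also have "\<dots> = f ` rel_interior C"
    by (rule rel_interior_convex_linear_image[OF assms(1) C(1), symmetric])
  finally show ?thesis
    using rel_interior_eq_between_convex_closure[OF C] by simp
qed

lemma nearly_convex_linear_vimage:
  fixes f :: "'a::euclidean_space \<Rightarrow> 'b::euclidean_space"
  assumes "linear f" "nearly_convex S" "f -` rel_interior S \<noteq> {}"
  shows "nearly_convex (f -` S)"
proof -
  obtain C where C: "convex C" "C \<subseteq> S" "S \<subseteq> closure C"
    using assms(2) unfolding nearly_convex_def by blast
  have ri_eq: "rel_interior S = rel_interior C"
    using rel_interior_eq_between_convex_closure[OF C] .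
  obtain q where q: "f q \<in> rel_interior C"
    using assms(3) ri_eq by blast
  have "convex (f -` rel_interior C)"
    using convex_linear_vimage[OF assms(1) convex_rel_interior[OF C(1)]] .
  moreover have "f -` rel_interior C \<subseteq> f -` S"
    using rel_interior_subset C(2) by blast
  moreover have "f -` S \<subseteq> closure (f -` rel_interior C)"
  proof (rule subset_closure_if_shrinks_into)
    fix w and e :: real assume "w \<in> f -` S" "0 < e" "e \<le> 1"
    then have "f w - e *\<^sub>R (f w - f q) \<in> rel_interior C"
      using rel_interior_closure_convex_shrink[OF C(1) q] C(3) by blast
    then show "w - e *\<^sub>R (w - q) \<in> f -` rel_interior C"
      by (simp add: linear_diff[OF assms(1)] linear_scale[OF assms(1)])
  qed
  ultimately show ?thesis
    unfolding nearly_convex_def by blast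
qed

lemma sv_dom_eq_fst_gph: "sv_dom F = fst ` gph F"
  by (force simp: sv_dom_def gph_def)

lemma ri_sv_dom_nearly_convex_map:
  assumes "nearly_convex_map F"
  shows "ri (sv_dom F) = fst ` rel_interior (gph F)"
  using rel_interior_nearly_convex_linear_image[OF linear_fst] assms
  by (simp add: ri_eq_rel_interior sv_dom_eq_fst_gph nearly_convex_map_def)

theorem theorem4p5:
  fixes F :: "'n::euclidean_space \<Rightarrow> 'p::euclidean_space set"
    and G :: "'n \<Rightarrow> 'q::euclidean_space set"
    and \<Theta> :: "'n set"
    and \<Psi> :: "'n \<times> 'n \<times> 'q \<Rightarrow> 'p set"
  assumes "nearly_convex_map F" and "nearly_convex_map G" and "nearly_convex \<Theta>"
    and "ri (sv_dom F) \<inter> ri (sv_dom G) \<inter> ri \<Theta> \<noteq> {}"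
    and "\<And>x u y. \<Psi> (x, u, y) = (if x \<in> \<Theta> \<and> y \<in> G x then F (x + u) else {})"
  shows "nearly_convex_map \<Psi>"
proof -
  define L :: "('n \<times> 'n \<times> 'q) \<times> 'p \<Rightarrow> 'n \<times> ('n \<times> 'q) \<times> ('n \<times> 'p)"
    where "L = (\<lambda>((x, u, y), z). (x, (x, y), (x + u, z)))"
  have "linear L"
    unfolding L_def by (rule linearI) (auto simp: algebra_simps)
  have gph_eq: "gph \<Psi> = L -` (\<Theta> \<times> gph G \<times> gph F)"
    by (auto simp: L_def gph_def assms(5) split: if_split_asm)
  have nc: "nearly_convex (gph G)" "nearly_convex (gph F)"
    using assms(1,2) by (simp_all add: nearly_convex_map_def)
  then have nc_prod: "nearly_convex (\<Theta> \<times> gph G \<times> gph F)"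
    by (intro nearly_convex_Times assms(3))
  obtain x0 where x0: "x0 \<in> ri (sv_dom F)" "x0 \<in> ri (sv_dom G)" "x0 \<in> ri \<Theta>"
    using assms(4) by blast
  obtain z0 where "(x0, z0) \<in> rel_interior (gph F)"
    using x0(1) ri_sv_dom_nearly_convex_map[OF assms(1)] by auto
  moreover obtain y0 where "(x0, y0) \<in> rel_interior (gph G)"
    using x0(2) ri_sv_dom_nearly_convex_map[OF assms(2)] by auto
  ultimately have "L ((x0, 0, y0), z0) \<in> rel_interior (\<Theta> \<times> gph G \<times> gph F)"
    using x0(3) nc assms(3)
    by (simp add: L_def ri_eq_rel_interior rel_interior_nearly_convex_Times nearly_convex_Times)
  then show ?thesis
    unfolding nearly_convex_map_def gph_eq
    using nearly_convex_linear_vimage[OF \<open>linear L\<close> nc_prod] by blast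
qed

end
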